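(* Let $q\in(0,1)$ and let $\tau$ be a GW tree with offspring distribution $p(0)=1-q$, $p(k)=q^2(1-q)^{k-1}$ for $k\ge1$ (which is critical). Let $(\alpha_n,n\in\mathbb N)$ be a sequence of positive integers with $\lim_{n\to\infty}\alpha_n/n^2=0$. Then the conditional law of $\tau$ given $\{\mathcal G_n(\tau)=\alpha_n\}$ converges in distribution to the law of Kesten's tree $\tau^*$ as $n\to\infty$.
   Context: Trees (Neveu formalism): $\mathcal U=\bigcup_{n\ge0}(\mathbb N^* )^n$, $|u|$ the length of $u$. A tree is $\mathbf t\subset\mathcal U$ with $\emptyset\in\mathbf t$, closed under taking prefixes, and such that for every $u\in\mathbf t$ there is $k_u(\mathbf t)\ge0$ with $ui\in\mathbf t\iff1\le i\le k_u(\mathbf t)$. $\mathcal G_n(\mathbf t)=\mathrm{Card}\{u\in\mathbf t:|u|=n\}$. $r_h(\mathbf t)=\{u\in\mathbf t:|u|\le h\}$; convergence in distribution of random trees $T_n\to T$ means $\mathbb P(r_h(T_n)=\mathbf t)\to\mathbb P(r_h(T)=\mathbf t)$ for all $h$ and $\mathbf t$. A GW tree $\tau$ with offspring distribution $p$ satisfies $\mathbb P(r_h(\tau)=\mathbf t)=\prod_{u\in r_{h-1}(\mathbf t)}p(k_u(\mathbf t))$ for all $h\ge1$ and trees $\mathbf t$ of height $\le h$. Kesten's tree $\tau^*$ (for mean $\mu\le1$): with $p^*(n)=np(n)/\mu$, $\tau^*$ is a random tree with a random sequence $(V_k)_{k\ge1}$, $V_1\cdots V_h\in\tau^*$ for all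 $h$, constructed recursively: given $(V_1,\dots,V_h)$ and $r_h(\tau^* )$, the numbers of children of the vertices $v$ with $|v|=h$ are independent, with law $p$ if $v\ne V_1\cdots V_h$ and $p^*$ if $v=V_1\cdots V_h$; then $V_{h+1}$ is uniform on $\{1,\dots,k_{V_1\cdots V_h}(\tau^* )\}$. *)

theory Defs
  imports "HOL-Probability.Probability"
begin

text \<open>Neveu trees: finite words over positive integers, encoded as nat lists.
  Labels 0 are excluded automatically by the children condition.\<close>

type_synonym tree = "nat list set"

definition is_tree :: "tree \<Rightarrow> bool" where
  "is_tree t \<longleftrightarrow> [] \<in> t \<and> (\<forall>u v. u @ v \<in> t \<longrightarrow> u \<in> t) \<and>
     (\<forall>u\<in>t. \<exists>k::nat. \<forall>i. u @ [i] \<in> t \<longleftrightarrow> 1 \<le> i \<and> i \<le> k)"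

definition kids :: "tree \<Rightarrow> nat list \<Rightarrow> nat" where
  "kids t u = card {i. u @ [i] \<in> t}"

definition gen :: "nat \<Rightarrow> tree \<Rightarrow> nat" where
  "gen n t = card {u\<in>t. length u = n}"

definition restr :: "nat \<Rightarrow> tree \<Rightarrow> tree" where
  "restr h t = {u\<in>t. length u \<le> h}"

definition height_le :: "nat \<Rightarrow> tree \<Rightarrow> bool" where
  "height_le h t \<longleftrightarrow> (\<forall>u\<in>t. length u \<le> h)"

definition geom_offspring :: "real \<Rightarrow> nat \<Rightarrow> real" where
  "geom_offspring q k = (if k = 0 then 1 - q else q^2 * (1 - q)^(k - 1))"

definition offspring_mean :: "(nat \<Rightarrow> real) \<Rightarrow> real" where
  "offspring_mean p = (\<Sum>k. real k * p k)"

definition size_biased :: "(nat \<Rightarrow> real) \<Rightarrow> nat \<Rightarrow> real" where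
  "size_biased p n = real n * p n / offspring_mean p"

definition is_GW_tree :: "'a measure \<Rightarrow> ('a \<Rightarrow> tree) \<Rightarrow> (nat \<Rightarrow> real) \<Rightarrow> bool" where
  "is_GW_tree M T p \<longleftrightarrow> prob_space M \<and>
     (\<forall>\<omega>\<in>space M. is_tree (T \<omega>)) \<and>
     (\<forall>h t. {\<omega>\<in>space M. restr h (T \<omega>) = t} \<in> sets M) \<and>
     (\<forall>h\<ge>1. \<forall>t. is_tree t \<and> height_le h t \<longrightarrow>
        measure M {\<omega>\<in>space M. restr h (T \<omega>) = t} = (\<Prod>u\<in>restr (h - 1) t. p (kids t u)))"

definition spine :: "(nat \<Rightarrow> nat) \<Rightarrow> nat \<Rightarrow> nat list" where
  "spine V h = map V [1..<h+1]"

text \<open>Kesten's tree (T, V) on N: the recursive construction, written as the joint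
  law of (r_h(T), V_1...V_h) obtained by the chain rule: spine vertices u (prefixes
  of the spine) of generation < h have k_u with law p*, and the next spine label
  is uniform on {1..k_u}; other vertices have law p, all independent.\<close>
definition is_Kesten_tree :: "'b measure \<Rightarrow> ('b \<Rightarrow> tree) \<Rightarrow> ('b \<Rightarrow> nat \<Rightarrow> nat)
     \<Rightarrow> (nat \<Rightarrow> real) \<Rightarrow> bool" where
  "is_Kesten_tree N T V p \<longleftrightarrow> prob_space N \<and>
     (\<forall>\<omega>\<in>space N. is_tree (T \<omega>) \<and> (\<forall>h. spine (V \<omega>) h \<in> T \<omega>)) \<and>
     (\<forall>h t v. {\<omega>\<in>space N. restr h (T \<omega>) = t \<and> spine (V \<omega>) h = v} \<in> sets N) \<and>
     (\<forall>h\<ge>1. \<forall>t v. is_tree t \<and> height_le h t \<and> length v = h \<and> v \<in> t \<longrightarrow>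
        measure N {\<omega>\<in>space N. restr h (T \<omega>) = t \<and> spine (V \<omega>) h = v} =
          (\<Prod>u\<in>restr (h - 1) t.
             if u = take (length u) v then size_biased p (kids t u) / real (kids t u)
             else p (kids t u)))"

end

theory Submission
  imports Defs "HOL-Real_Asymp.Real_Asymp"
begin

text \<open>For the geometric offspring law the generating function is a linear fractional map, and so
  are its iterates: the m-th iterate is the generating function of the geometric law with parameter
  q / (q + m (1 - q)). By the branching property, given that the first h generations form the tree t
  with j vertices at height h, the size of generation n is a sum of j independent such variables
  with parameter of order 1/(n - h), while the size of generation n itself has the geometric law of
  parameter of order 1/n. As long as the conditioning value is o(n^2), the j-fold convolution at
  that value is asymptotically j times a single geometric probability, and the two geometric
  probabilities are asymptotically equal. So the conditional probability of t tends to j times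
  its unconditional probability, which is the probability of t under Kesten's tree, whose spine
  may pass through any of the j vertices at height h.\<close>

section \<open>Double series and power series\<close>

lemma ennreal_suminf_swap:
  fixes f :: "nat \<Rightarrow> nat \<Rightarrow> ennreal"
  shows "(\<Sum>i. \<Sum>j. f i j) = (\<Sum>j. \<Sum>i. f i j)"
proof -
  interpret pair_sigma_finite "count_space (UNIV::nat set)" "count_space (UNIV::nat set)"
    by (intro pair_sigma_finite.intro sigma_finite_measure_count_space_countable) auto
  have "(\<Sum>i. \<Sum>j. f i j) = (\<integral>\<^sup>+ i. (\<integral>\<^sup>+ j. f i j \<partial>count_space UNIV) \<partial>count_space UNIV)"
    by (simp add: nn_integral_count_space_nat)
  also have "\<dots> = (\<integral>\<^sup>+ j. (\<integral>\<^sup>+ i. f i j \<partial>count_space UNIV) \<partial>count_space UNIV)"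
    by (rule Fubini'[symmetric]) (simp add: pair_measure_countable)
  also have "\<dots> = (\<Sum>j. \<Sum>i. f i j)"
    by (simp add: nn_integral_count_space_nat)
  finally show ?thesis .
qed

lemma sums_swap_nonneg:
  fixes u :: "nat \<Rightarrow> nat \<Rightarrow> real"
  assumes nonneg: "\<And>a b. 0 \<le> u a b" and inner: "\<And>b. (\<lambda>a. u a b) sums v b" and outer: "v sums S"
  shows "summable (u a)" and "(\<lambda>a. \<Sum>b. u a b) sums S"
proof -
  have v_nonneg: "0 \<le> v b" for b using sums_le[OF _ sums_zero inner[of b]] nonneg by auto
  have S_nonneg: "0 \<le> S" using sums_le[OF _ sums_zero outer] v_nonneg by auto
  have "(\<Sum>a. \<Sum>b. ennreal (u a b)) = (\<Sum>b. \<Sum>a. ennreal (u a b))"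
    by (rule ennreal_suminf_swap)
  also have "\<dots> = (\<Sum>b. ennreal (v b))"
    using suminf_ennreal_eq[OF nonneg inner] by simp
  also have "\<dots> = ennreal S" using suminf_ennreal_eq[OF v_nonneg outer] .
  finally have swapped: "(\<Sum>a. \<Sum>b. ennreal (u a b)) = ennreal S" .
  have "(\<Sum>b. ennreal (u a b)) \<noteq> top" for a
  proof -
    have "(\<Sum>b. ennreal (u a b)) \<le> ennreal S"
      using sum_le_suminf[of "\<lambda>a. \<Sum>b. ennreal (u a b)" "{a}"] swapped by auto
    then show ?thesis by (auto simp: top_unique)
  qed
  then show row_summable: "summable (u a)" for a
    by (rule summable_suminf_not_top[of "u a", OF nonneg])
  have row_nonneg: "0 \<le> (\<Sum>b. u a b)" for a using suminf_nonneg[OF row_summable] nonneg by blast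
  have rows: "(\<Sum>a. ennreal (\<Sum>b. u a b)) = ennreal S"
    using swapped suminf_ennreal2[OF nonneg row_summable] by simp
  have summable_rows: "summable (\<lambda>a. \<Sum>b. u a b)"
    using summable_suminf_not_top[OF row_nonneg] rows by simp
  have "(\<Sum>a. \<Sum>b. u a b) = S"
    using rows suminf_ennreal2[OF row_nonneg summable_rows] S_nonneg
      suminf_nonneg[OF summable_rows row_nonneg] by simp
  then show "(\<lambda>a. \<Sum>b. u a b) sums S" using summable_rows by (simp add: summable_sums_iff)
qed

lemma powser_vanishing_coeff:
  fixes c :: "nat \<Rightarrow> real"
  assumes "\<And>s. 0 \<le> s \<Longrightarrow> s < 1 \<Longrightarrow> (\<lambda>a. c a * s^a) sums 0"
  shows "c k = 0"
proof (induction k rule: less_induct)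
  case (less k)
  define d where "d a = c (a + k)" for a
  \<comment> \<open>by the induction hypothesis the shifted series is the original one divided by s^k\<close>
  have d_sums: "(\<lambda>a. d a * s^a) sums 0" if s: "0 < s" "s < 1" for s
  proof -
    have "(\<lambda>a. c (a + k) * s^(a+k)) sums (0 - (\<Sum>i<k. c i * s^i))"
      using assms[of s] s by (subst sums_iff_shift) simp
    then have "(\<lambda>a. s^k * (d a * s^a)) sums 0"
      using less by (simp add: d_def power_add algebra_simps)
    then show ?thesis using s sums_mult_iff[of "s^k" "\<lambda>a. d a * s^a" 0] by simp
  qed
  have "summable (\<lambda>a. c (a + k) * (1/2::real)^(a+k))"
    using assms[of "1/2"] by (subst summable_iff_shift) (simp add: sums_iff)
  from summable_mult[OF this, of "2^k"]
  have "summable (\<lambda>a. d a * (1/2)^a)"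
    by (simp add: d_def power_add field_simps)
  then have "isCont (\<lambda>x. \<Sum>a. d a * x^a) 0"
    by (rule isCont_powser) simp
  then have "((\<lambda>x. \<Sum>a. d a * x^a) \<longlongrightarrow> d 0) (at_right 0)"
    by (simp add: isCont_def tendsto_mono[OF at_within_le_at])
  moreover have "((\<lambda>x. \<Sum>a. d a * x^a) \<longlongrightarrow> 0) (at_right (0::real))"
    by (rule tendsto_eventually, rule eventually_at_rightI[of 0 1]) (auto dest: d_sums simp: sums_iff)
  ultimately have "d 0 = 0" using tendsto_unique by force
  then show ?case by (simp add: d_def)
qed

section \<open>Convolution powers and probability generating functions\<close>

fun conv_power :: "(nat \<Rightarrow> real) \<Rightarrow> nat \<Rightarrow> nat \<Rightarrow> real" where
  "conv_power f 0 a = (if a = 0 then 1 else 0)"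
| "conv_power f (Suc j) a = (\<Sum>c\<le>a. f c * conv_power f j (a - c))"

lemma conv_power_nonneg: "(\<And>c. 0 \<le> f c) \<Longrightarrow> 0 \<le> conv_power f j a"
  by (induction j arbitrary: a) (auto intro!: sum_nonneg mult_nonneg_nonneg)

lemma conv_power_at_0: "conv_power f j 0 = f 0 ^ j"
  by (induction j) auto

lemma conv_power_1: "conv_power f 1 a = f a"
proof -
  have "(\<Sum>c\<le>a. f c * (if a - c = 0 then 1 else 0)) = (\<Sum>c\<in>{a}. f c)"
    by (rule sum.mono_neutral_cong_right) auto
  then show ?thesis by simp
qed

lemma conv_power_sums:
  assumes nonneg: "\<And>c. 0 \<le> f c" and s: "0 \<le> s" and f_sums: "(\<lambda>a. f a * s^a) sums P"
  shows "(\<lambda>a. conv_power f j a * s^a) sums (P^j)"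
proof (induction j)
  case 0
  have "(\<lambda>a. conv_power f 0 a * s^a) = (\<lambda>a. if a = 0 then 1 else 0)" by auto
  then show ?case using sums_single[of 0 "\<lambda>_. (1::real)"] by simp
next
  case (Suc j)
  have Cauchy: "conv_power f (Suc j) a * s^a =
      (\<Sum>c\<le>a. (f c * s^c) * (conv_power f j (a - c) * s^(a-c)))" for a
  proof -
    have "conv_power f (Suc j) a * s^a = (\<Sum>c\<le>a. f c * conv_power f j (a - c) * s^a)"
      by (simp add: sum_distrib_right)
    also have "\<dots> = (\<Sum>c\<le>a. (f c * s^c) * (conv_power f j (a - c) * s^(a-c)))"
    proof (rule sum.cong[OF refl])
      fix c assume "c \<in> {..a}"
      then obtain d where "a = c + d" by (auto dest: le_Suc_ex)
      then show "f c * conv_power f j (a - c) * s^a = (f c * s^c) * (conv_power f j (a - c) * s^(a-c))"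
        by (simp add: power_add mult_ac)
    qed
    finally show ?thesis .
  qed
  have "summable (\<lambda>k. norm (f k * s^k))" "summable (\<lambda>k. norm (conv_power f j k * s^k))"
    using f_sums Suc conv_power_nonneg[OF nonneg] nonneg s by (simp_all add: sums_iff abs_mult)
  from Cauchy_product_sums[OF this]
  have "(\<lambda>a. \<Sum>c\<le>a. (f c * s^c) * (conv_power f j (a - c) * s^(a-c))) sums (P * P^j)"
    using f_sums Suc by (simp add: sums_iff)
  then show ?case unfolding Cauchy[symmetric] power_Suc .
qed

section \<open>The geometric offspring law\<close>

definition geom_pgf :: "real \<Rightarrow> real \<Rightarrow> real" where
  "geom_pgf \<beta> s = (1 - \<beta>) + \<beta>^2 * s / (1 - (1 - \<beta>) * s)"

text \<open>The size of generation m of the tree with offspring law geom_offspring q has the law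
  geom_offspring (geom_param q m).\<close>
definition geom_param :: "real \<Rightarrow> nat \<Rightarrow> real" where
  "geom_param q m = q / (q + real m * (1 - q))"

lemma geom_offspring_nonneg: "0 \<le> \<beta> \<Longrightarrow> \<beta> \<le> 1 \<Longrightarrow> 0 \<le> geom_offspring \<beta> c"
  by (auto simp: geom_offspring_def)

lemma geom_offspring_pos: "0 < \<beta> \<Longrightarrow> \<beta> < 1 \<Longrightarrow> 0 < geom_offspring \<beta> a"
  by (auto simp: geom_offspring_def)

lemma geom_offspring_sums:
  assumes "0 < \<beta>" "\<beta> \<le> 1" "0 \<le> s" "s \<le> 1"
  shows "(\<lambda>a. geom_offspring \<beta> a * s^a) sums geom_pgf \<beta> s"
proof -
  have "norm ((1 - \<beta>) * s) < 1" using assms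
    by (auto simp: abs_mult) (smt (verit) mult_left_le mult_nonneg_nonneg)
  from sums_mult[OF geometric_sums[OF this], of "\<beta>^2 * s"]
  have "(\<lambda>n. geom_offspring \<beta> (Suc n) * s^(Suc n)) sums (\<beta>^2 * s / (1 - (1 - \<beta>) * s))"
    by (simp add: geom_offspring_def power_mult_distrib mult_ac)
  then have "(\<lambda>a. geom_offspring \<beta> a * s^a) sums
      (\<beta>^2 * s / (1 - (1 - \<beta>) * s) + geom_offspring \<beta> 0 * s^0)"
    by (subst (asm) sums_Suc_iff)
  then show ?thesis by (simp add: geom_pgf_def geom_offspring_def add.commute)
qed

lemma offspring_mean_geom:
  assumes "0 < q" "q < 1"
  shows "offspring_mean (geom_offspring q) = 1"
proof -
  have "norm (1 - q) < 1" using assms by simp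
  from sums_mult[OF geometric_sums_times_n[OF this], of "q^2 / (1 - q)"]
  have "(\<lambda>k. q^2 / (1 - q) * ((1 - q)^k * real k)) sums 1"
    using assms by (simp add: field_simps power2_eq_square)
  moreover have "q^2 / (1 - q) * ((1 - q)^k * real k) = real k * geom_offspring q k" for k
    using assms by (cases k) (simp_all add: geom_offspring_def field_simps)
  ultimately show ?thesis by (simp add: offspring_mean_def sums_iff)
qed

lemma geom_pgf_range:
  assumes "0 < \<beta>" "\<beta> \<le> 1" "0 \<le> s" "s \<le> 1"
  shows "0 \<le> geom_pgf \<beta> s \<and> geom_pgf \<beta> s \<le> 1"
proof -
  have denom: "0 < 1 - (1 - \<beta>) * s" using assms
    by (smt (verit) mult_left_le mult_nonneg_nonneg)
  have "\<beta> * (1 - (1 - \<beta>) * s) - \<beta>^2 * s = \<beta> * (1 - s)"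
    by (simp add: algebra_simps power2_eq_square)
  then have "\<beta>^2 * s \<le> \<beta> * (1 - (1 - \<beta>) * s)" using assms by (smt (verit) mult_nonneg_nonneg)
  then show ?thesis using assms denom by (simp add: geom_pgf_def divide_le_eq)
qed

lemma geom_param_pos: "0 < q \<Longrightarrow> q < 1 \<Longrightarrow> 0 < geom_param q m"
  by (auto simp: geom_param_def intro!: divide_pos_pos add_pos_nonneg)

lemma geom_param_le_1: "0 < q \<Longrightarrow> q < 1 \<Longrightarrow> geom_param q m \<le> 1"
  unfolding geom_param_def by (rule divide_le_eq_1_pos[THEN iffD2]) (auto intro: add_pos_nonneg)

lemma geom_param_less_1: "0 < q \<Longrightarrow> q < 1 \<Longrightarrow> 1 \<le> m \<Longrightarrow> geom_param q m < 1"
  unfolding geom_param_def by (subst divide_less_eq_1_pos) (auto intro: add_pos_nonneg)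

lemma geom_param_antimono: "0 < q \<Longrightarrow> q < 1 \<Longrightarrow> m1 \<le> m2 \<Longrightarrow> geom_param q m2 \<le> geom_param q m1"
  unfolding geom_param_def
  by (intro divide_left_mono) (auto intro!: mult_right_mono add_pos_nonneg mult_pos_pos)

lemma geom_pgf_geom_param:
  assumes q: "0 < q" "q < 1" and "s \<le> 1"
  shows "geom_pgf (geom_param q m) s = 1 - q * (1 - s) / (real m * (1 - q) * (1 - s) + q)"
proof -
  define B where "B = q + real m * (1 - q)"
  have B: "0 < B" "B - q = real m * (1 - q)" using q by (auto simp: B_def intro!: add_pos_nonneg)
  define E where "E = (B - q) * (1 - s) + q"
  have E: "0 < E" using B assms by (simp add: E_def add_nonneg_pos)
  have denom: "1 - (1 - q / B) * s = E / B"
    using B by (simp add: E_def field_simps)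
  have "geom_pgf (q / B) s = 1 - (q * E - q^2 * s) / (B * E)"
    unfolding geom_pgf_def denom using B E by (simp add: field_simps power2_eq_square)
  also have "q * E - q^2 * s = q * (B * (1 - s))"
    by (simp add: E_def algebra_simps power2_eq_square)
  also have "1 - q * (B * (1 - s)) / (B * E) = 1 - q * (1 - s) / E"
    using B by simp
  finally have "geom_pgf (q / B) s = 1 - q * (1 - s) / E" .
  then show ?thesis by (simp add: geom_param_def B_def[symmetric] E_def B(2))
qed

lemma geom_pgf_iterate:
  assumes q: "0 < q" "q < 1" and s: "0 \<le> s" "s \<le> 1"
  shows "(geom_pgf q ^^ m) s = geom_pgf (geom_param q m) s"
  using s
proof (induction m arbitrary: s)
  case 0
  then show ?case using q by (simp add: geom_param_def geom_pgf_def)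
next
  case (Suc m)
  define D where "D = (1 - q) * (1 - s) + q"
  have D: "0 < D" using Suc.prems q by (simp add: D_def add_nonneg_pos)
  define z where "z = q * (1 - s) / D"
  have z: "0 \<le> z" using D Suc.prems q by (simp add: z_def)
  have "geom_pgf q s = 1 - z"
    using geom_pgf_geom_param[OF q Suc.prems(2), of 1] q by (simp add: z_def D_def geom_param_def)
  moreover have "0 \<le> geom_pgf q s \<and> geom_pgf q s \<le> 1"
    using geom_pgf_range[of q s] q Suc.prems by auto
  ultimately have "(geom_pgf q ^^ Suc m) s = geom_pgf (geom_param q m) (1 - z)"
    using Suc.IH by (simp only: funpow_Suc_right comp_apply)
  also have "\<dots> = 1 - q * z / (real m * (1 - q) * z + q)"
    using geom_pgf_geom_param[OF q, of "1 - z" m] z by simp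
  also have "\<dots> = 1 - q * (1 - s) / (real (Suc m) * (1 - q) * (1 - s) + q)"
  proof -
    define X where "X = real (Suc m) * (1 - q) * (1 - s) + q"
    have X: "0 < X" using Suc.prems q by (simp add: X_def add_nonneg_pos)
    have "real m * (1 - q) * z + q = q * X / D"
      using D unfolding z_def X_def D_def by (simp add: field_simps)
    then show ?thesis using D X q by (simp add: z_def) (simp add: X_def)
  qed
  also have "\<dots> = geom_pgf (geom_param q (Suc m)) s"
    using geom_pgf_geom_param[OF q Suc.prems(2)] by simp
  finally show ?case .
qed

section \<open>The generation-size chain\<close>

text \<open>The m-step transition probabilities of the Markov chain of generation sizes.\<close>
fun generation_kernel :: "(nat \<Rightarrow> real) \<Rightarrow> nat \<Rightarrow> nat \<Rightarrow> nat \<Rightarrow> real" where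
  "generation_kernel p 0 j a = (if a = j then 1 else 0)"
| "generation_kernel p (Suc m) j a = (\<Sum>b. generation_kernel p m j b * conv_power p b a)"

lemma generation_kernel_sums:
  assumes p_nonneg: "\<And>k. 0 \<le> p k"
    and pgf: "\<And>s. 0 \<le> s \<Longrightarrow> s \<le> 1 \<Longrightarrow> (\<lambda>a. p a * s^a) sums G s"
    and G_range: "\<And>s. 0 \<le> s \<Longrightarrow> s \<le> 1 \<Longrightarrow> 0 \<le> G s \<and> G s \<le> 1"
  shows "0 \<le> generation_kernel p m j a"
    and "0 \<le> s \<Longrightarrow> s \<le> 1 \<Longrightarrow> (\<lambda>a. generation_kernel p m j a * s^a) sums ((G ^^ m) s)^j"
proof -
  let ?K = "generation_kernel p"
  have "(\<forall>a. 0 \<le> ?K m j a) \<and>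
      (\<forall>s. 0 \<le> s \<longrightarrow> s \<le> 1 \<longrightarrow> (\<lambda>a. ?K m j a * s^a) sums ((G ^^ m) s)^j)"
  proof (induction m)
    case 0
    have "(\<lambda>a. ?K 0 j a * s^a) sums s^j" for s
    proof -
      have "(\<lambda>a. ?K 0 j a * s^a) = (\<lambda>a. if a = j then s^a else 0)" by auto
      then show ?thesis using sums_single[of j "\<lambda>a. s^a"] by simp
    qed
    then show ?case by simp
  next
    case (Suc m)
    have K_nonneg: "0 \<le> ?K m j b" for b using Suc by blast
    have swap: "summable (\<lambda>b. ?K m j b * conv_power p b a * s^a) \<and>
        (\<lambda>a. \<Sum>b. ?K m j b * conv_power p b a * s^a) sums ((G ^^ Suc m) s)^j"
      if s: "0 \<le> s" "s \<le> 1" for s a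
    proof -
      have inner: "(\<lambda>a. ?K m j b * conv_power p b a * s^a) sums (?K m j b * (G s)^b)" for b
        using sums_mult[OF conv_power_sums[OF p_nonneg s(1) pgf[OF s]], of "?K m j b"]
        by (simp add: mult.assoc)
      have outer: "(\<lambda>b. ?K m j b * (G s)^b) sums ((G ^^ m) (G s))^j"
        using Suc G_range[OF s] by blast
      have nonneg: "0 \<le> ?K m j b * conv_power p b a * s^a" for a b
        using K_nonneg conv_power_nonneg[OF p_nonneg] s by simp
      from sums_swap_nonneg[of "\<lambda>a b. ?K m j b * conv_power p b a * s^a", OF nonneg inner outer]
      show ?thesis by (simp only: funpow_Suc_right comp_apply)
    qed
    have summable: "summable (\<lambda>b. ?K m j b * conv_power p b a)" for a
      using swap[of 1 a] by simp
    have "(\<Sum>b. ?K m j b * conv_power p b a * s^a) = ?K (Suc m) j a * s^a" for a s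
      using suminf_mult2[OF summable[of a], of "s^a"] by simp
    then show ?case
      using swap summable K_nonneg conv_power_nonneg[OF p_nonneg]
      by (auto intro!: suminf_nonneg)
  qed
  then show "0 \<le> ?K m j a" and "0 \<le> s \<Longrightarrow> s \<le> 1 \<Longrightarrow> (\<lambda>a. ?K m j a * s^a) sums ((G ^^ m) s)^j"
    by auto
qed

lemma generation_kernel_geom:
  assumes q: "0 < q" "q < 1"
  shows "generation_kernel (geom_offspring q) m j a = conv_power (geom_offspring (geom_param q m)) j a"
proof -
  let ?\<beta> = "geom_param q m"
  have \<beta>: "0 < ?\<beta>" "?\<beta> \<le> 1" using geom_param_pos geom_param_le_1 q by auto
  have "(\<lambda>a. (generation_kernel (geom_offspring q) m j a - conv_power (geom_offspring ?\<beta>) j a) * s^a)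
      sums 0" if s: "0 \<le> s" "s < 1" for s
  proof -
    have "(\<lambda>a. generation_kernel (geom_offspring q) m j a * s^a) sums ((geom_pgf q ^^ m) s)^j"
      by (rule generation_kernel_sums(2))
        (use q s in \<open>auto simp: geom_offspring_nonneg geom_offspring_sums geom_pgf_range\<close>)
    then have "(\<lambda>a. generation_kernel (geom_offspring q) m j a * s^a) sums (geom_pgf ?\<beta> s)^j"
      using geom_pgf_iterate[OF q, of s m] s by simp
    moreover have "(\<lambda>a. conv_power (geom_offspring ?\<beta>) j a * s^a) sums (geom_pgf ?\<beta> s)^j"
      using conv_power_sums[OF geom_offspring_nonneg s(1) geom_offspring_sums] \<beta> s by simp
    ultimately have "(\<lambda>a. generation_kernel (geom_offspring q) m j a * s^a -
        conv_power (geom_offspring ?\<beta>) j a * s^a) sums ((geom_pgf ?\<beta> s)^j - (geom_pgf ?\<beta> s)^j)"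
      by (rule sums_diff)
    then show ?thesis by (simp add: left_diff_distrib)
  qed
  from powser_vanishing_coeff[OF this] show ?thesis by simp
qed

section \<open>Local asymptotics of convolution powers of geometric laws\<close>

lemma geom_offspring_mult:
  assumes "\<beta> < 1" "1 \<le> c" "1 \<le> d"
  shows "geom_offspring \<beta> c * geom_offspring \<beta> d = \<beta>^2 / (1 - \<beta>) * geom_offspring \<beta> (c + d)"
proof -
  obtain c' d' where "c = Suc c'" "d = Suc d'" using assms by (metis Suc_le_D One_nat_def)
  then show ?thesis
    using assms by (simp add: geom_offspring_def power_add power2_eq_square field_simps)
qed

lemma conv_power_Suc_split:
  assumes "1 \<le> a"
  shows "conv_power f (Suc j) a =
    f 0 * conv_power f j a + f a * f 0 ^ j + (\<Sum>c\<in>{1..<a}. f c * conv_power f j (a - c))"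
proof -
  have "{..a} = insert 0 (insert a {1..<a})" using assms by auto
  then show ?thesis using assms by (simp add: conv_power_at_0)
qed

lemma conv_power_geom_lower:
  assumes \<beta>: "0 < \<beta>" "\<beta> < 1" and a: "1 \<le> a"
  shows "real j * (1 - \<beta>)^(j - 1) * geom_offspring \<beta> a \<le> conv_power (geom_offspring \<beta>) j a"
proof (induction j)
  case 0
  then show ?case using conv_power_nonneg[of "geom_offspring \<beta>"] \<beta> by (simp add: geom_offspring_nonneg)
next
  case (Suc j)
  let ?g = "geom_offspring \<beta>" and ?x = "1 - \<beta>"
  have g_nonneg: "0 \<le> ?g c" for c using \<beta> by (simp add: geom_offspring_nonneg)
  have g0: "?g 0 = ?x" by (simp add: geom_offspring_def)
  have "?x * (real j * ?x^(j - 1) * ?g a) \<le> ?x * conv_power ?g j a"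
    using Suc \<beta> by (intro mult_left_mono) auto
  moreover have "?x * (real j * ?x^(j - 1) * ?g a) = real j * ?x^j * ?g a" by (cases j) auto
  moreover have "0 \<le> (\<Sum>c\<in>{1..<a}. ?g c * conv_power ?g j (a - c))"
    by (intro sum_nonneg mult_nonneg_nonneg g_nonneg conv_power_nonneg)
  moreover have "conv_power ?g (Suc j) a =
      ?x * conv_power ?g j a + ?g a * ?x^j + (\<Sum>c\<in>{1..<a}. ?g c * conv_power ?g j (a - c))"
    using conv_power_Suc_split[OF a, of ?g j] unfolding g0 .
  moreover have "real (Suc j) * ?x^(Suc j - 1) * ?g a = real j * ?x^j * ?g a + ?g a * ?x^j"
    by (simp add: algebra_simps)
  ultimately show ?case by linarith
qed

lemma conv_power_geom_upper:
  assumes \<beta>: "0 < \<beta>" "\<beta> < 1"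
  shows "1 \<le> a \<Longrightarrow> real a * \<beta>^2 \<le> 1 - \<beta> \<Longrightarrow>
    conv_power (geom_offspring \<beta>) j a \<le> (real j + 4^j * (real a * \<beta>^2 / (1 - \<beta>))) * geom_offspring \<beta> a"
proof (induction j arbitrary: a)
  case 0
  then show ?case using \<beta> by (simp add: geom_offspring_nonneg)
next
  case (Suc j)
  let ?g = "geom_offspring \<beta>"
  define x where "x = 1 - \<beta>"
  define e where "e = real a * \<beta>^2 / x"
  define K where "K = real j + 4^j * e"
  have x: "0 < x" using \<beta> by (simp add: x_def)
  have g_nonneg: "0 \<le> ?g c" for c using \<beta> by (simp add: geom_offspring_nonneg)
  have e: "0 \<le> e" "e \<le> 1" using Suc.prems x by (simp_all add: e_def x_def)
  have j_le: "real j \<le> 4^j"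
  proof -
    have "j < 2^j" by (rule less_exp)
    also have "(2::nat)^j \<le> 4^j" by (simp add: power_mono)
    finally show ?thesis by (metis less_imp_le of_nat_le_iff of_nat_numeral of_nat_power)
  qed
  have IH: "conv_power ?g j d \<le> K * ?g d" if d: "1 \<le> d" "d \<le> a" for d
  proof -
    have "real d * \<beta>^2 \<le> real a * \<beta>^2" using d by (simp add: mult_right_mono)
    then have "real d * \<beta>^2 / x \<le> e" using x by (simp add: e_def divide_right_mono)
    then have "real j + 4^j * (real d * \<beta>^2 / x) \<le> K"
      unfolding K_def by (intro add_left_mono mult_left_mono) simp_all
    moreover have "conv_power ?g j d \<le> (real j + 4^j * (real d * \<beta>^2 / x)) * ?g d"
      using Suc.IH d \<open>real d * \<beta>^2 \<le> real a * \<beta>^2\<close> Suc.prems by (simp add: x_def)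
    ultimately show ?thesis by (smt (verit) g_nonneg mult_right_mono)
  qed
  have g0: "?g 0 = x" by (simp add: geom_offspring_def x_def)
  have "x * conv_power ?g j a \<le> conv_power ?g j a"
    using \<beta> conv_power_nonneg[of ?g j a] g_nonneg by (simp add: x_def mult_left_le_one_le)
  then have first: "x * conv_power ?g j a \<le> K * ?g a"
    using IH[of a] Suc.prems(1) by linarith
  have second: "?g a * x^j \<le> ?g a" using x g_nonneg \<beta> by (simp add: x_def mult_left_le power_le_one)
  \<comment> \<open>each of the fewer than a middle terms is at most K \<beta>^2 / (1 - \<beta>) times g a\<close>
  have middle: "(\<Sum>c\<in>{1..<a}. ?g c * conv_power ?g j (a - c)) \<le> K * e * ?g a"
  proof -
    have "(\<Sum>c\<in>{1..<a}. ?g c * conv_power ?g j (a - c)) \<le> (\<Sum>c\<in>{1..<a}. K * (\<beta>^2 / x * ?g a))"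
    proof (intro sum_mono)
      fix c assume c: "c \<in> {1..<a}"
      have "?g c * conv_power ?g j (a - c) \<le> ?g c * (K * ?g (a - c))"
        using IH[of "a - c"] c g_nonneg[of c] by (intro mult_left_mono) auto
      also have "\<dots> = K * (?g c * ?g (a - c))" by (simp add: mult_ac)
      also have "?g c * ?g (a - c) = \<beta>^2 / x * ?g a"
        using geom_offspring_mult[of \<beta> c "a - c"] c \<beta> by (auto simp: x_def)
      finally show "?g c * conv_power ?g j (a - c) \<le> K * (\<beta>^2 / x * ?g a)" .
    qed
    also have "\<dots> = real (a - 1) * (K * (\<beta>^2 / x * ?g a))" by simp
    also have "\<dots> \<le> real a * (K * (\<beta>^2 / x * ?g a))"
      using x g_nonneg e by (intro mult_right_mono) (auto simp: K_def)
    finally show ?thesis by (simp add: e_def mult_ac)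
  qed
  have "K + 1 + K * e \<le> real (Suc j) + 4^Suc j * e"
  proof -
    have "real j * e \<le> 4^j * e" "4^j * (e * e) \<le> 4^j * e" "0 \<le> 4^j * e"
      using j_le e by (auto intro!: mult_right_mono mult_left_mono simp: mult_left_le)
    moreover have "K + 1 + K * e = real j + 1 + (4^j * e + real j * e + 4^j * (e * e))"
      by (simp add: K_def algebra_simps)
    moreover have "real (Suc j) + 4^Suc j * e = real j + 1 + 4 * (4^j * e)" by simp
    ultimately show ?thesis by linarith
  qed
  from mult_right_mono[OF this g_nonneg[of a]]
  have "K * ?g a + ?g a + K * e * ?g a \<le> (real (Suc j) + 4^Suc j * e) * ?g a"
    by (simp add: algebra_simps)
  moreover have "conv_power ?g (Suc j) a =
      x * conv_power ?g j a + ?g a * x^j + (\<Sum>c\<in>{1..<a}. ?g c * conv_power ?g j (a - c))"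
    using conv_power_Suc_split[OF Suc.prems(1), of ?g j] unfolding g0 .
  ultimately have "conv_power ?g (Suc j) a \<le> (real (Suc j) + 4^Suc j * e) * ?g a"
    using first second middle by linarith
  then show ?case by (simp add: e_def x_def)
qed

lemma geom_offspring_ratio_tendsto_1:
  fixes b c :: "nat \<Rightarrow> real" and \<alpha> :: "nat \<Rightarrow> nat"
  assumes \<alpha>: "\<And>n. 0 < \<alpha> n"
    and bc: "eventually (\<lambda>n. 0 < c n \<and> c n \<le> b n \<and> b n < 1) sequentially"
    and ratio: "(\<lambda>n. b n / c n) \<longlonglongrightarrow> 1" and c: "c \<longlonglongrightarrow> 0"
    and diff: "(\<lambda>n. real (\<alpha> n) * (b n - c n)) \<longlonglongrightarrow> 0"
  shows "(\<lambda>n. geom_offspring (b n) (\<alpha> n) / geom_offspring (c n) (\<alpha> n)) \<longlonglongrightarrow> 1"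
proof -
  define R where "R n = geom_offspring (b n) (\<alpha> n) / geom_offspring (c n) (\<alpha> n)" for n
  define L where "L n = (b n / c n)^2 * (1 - real (\<alpha> n) * (b n - c n) / (1 - c n))" for n
  define U where "U n = (b n / c n)^2" for n
  have bounds: "L n \<le> R n \<and> R n \<le> U n" if bc_n: "0 < c n \<and> c n \<le> b n \<and> b n < 1" for n
  proof -
    define y where "y = (1 - b n) / (1 - c n)"
    have y: "0 \<le> y" "y \<le> 1" using bc_n by (auto simp: y_def)
    have R_eq: "R n = U n * y ^ (\<alpha> n - 1)"
      using \<alpha>[of n] bc_n by (simp add: R_def U_def geom_offspring_def y_def power_divide)
    have "1 + real (\<alpha> n - 1) * (y - 1) \<le> y ^ (\<alpha> n - 1)"
      using Bernoulli_inequality[of "y - 1" "\<alpha> n - 1"] y by simp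
    moreover have "y - 1 = - ((b n - c n) / (1 - c n))" using bc_n by (simp add: y_def field_simps)
    moreover have "real (\<alpha> n - 1) * ((b n - c n) / (1 - c n)) \<le> real (\<alpha> n) * ((b n - c n) / (1 - c n))"
      using bc_n by (intro mult_right_mono) auto
    ultimately have "1 - real (\<alpha> n) * (b n - c n) / (1 - c n) \<le> y ^ (\<alpha> n - 1)" by simp
    then have "L n \<le> R n" unfolding R_eq L_def U_def by (intro mult_left_mono) auto
    moreover have "R n \<le> U n" unfolding R_eq using y by (simp add: U_def mult_left_le power_le_one)
    ultimately show ?thesis by simp
  qed
  have "(\<lambda>n. real (\<alpha> n) * (b n - c n) / (1 - c n)) \<longlonglongrightarrow> 0 / (1 - 0)"
    using diff c by (intro tendsto_divide tendsto_diff) auto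
  from tendsto_mult[OF tendsto_power[OF ratio, of 2] tendsto_diff[OF tendsto_const this, of 1]]
  have L_lim: "L \<longlonglongrightarrow> 1" unfolding L_def by simp
  have U_lim: "U \<longlonglongrightarrow> 1" unfolding U_def using tendsto_power[OF ratio, of 2] by simp
  from eventually_mono[OF bc bounds]
  have "eventually (\<lambda>n. L n \<le> R n) sequentially" "eventually (\<lambda>n. R n \<le> U n) sequentially"
    by (simp_all add: eventually_conj_iff)
  from tendsto_sandwich[OF this L_lim U_lim] show ?thesis by (simp add: R_def)
qed

lemma conv_power_geom_ratio:
  fixes b :: "nat \<Rightarrow> real" and \<alpha> :: "nat \<Rightarrow> nat"
  assumes \<alpha>: "\<And>n. 0 < \<alpha> n" and b: "eventually (\<lambda>n. 0 < b n \<and> b n < 1) sequentially"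
    and b0: "b \<longlonglongrightarrow> 0" and small: "(\<lambda>n. real (\<alpha> n) * b n ^ 2) \<longlonglongrightarrow> 0"
  shows "(\<lambda>n. conv_power (geom_offspring (b n)) j (\<alpha> n) / geom_offspring (b n) (\<alpha> n)) \<longlonglongrightarrow> real j"
proof -
  define L where "L n = real j * (1 - b n)^(j - 1)" for n
  define U where "U n = real j + 4^j * (real (\<alpha> n) * b n ^ 2 / (1 - b n))" for n
  have "(\<lambda>n. 1 - b n - real (\<alpha> n) * b n ^ 2) \<longlonglongrightarrow> 1 - 0 - 0"
    using b0 small by (intro tendsto_diff) auto
  then have "eventually (\<lambda>n. 0 < 1 - b n - real (\<alpha> n) * b n ^ 2) sequentially"
    by (rule order_tendstoD) simp
  then have "eventually (\<lambda>n. real (\<alpha> n) * b n ^ 2 \<le> 1 - b n) sequentially"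
    by (rule eventually_mono) simp
  with b have "eventually (\<lambda>n. L n \<le> conv_power (geom_offspring (b n)) j (\<alpha> n) / geom_offspring (b n) (\<alpha> n)
      \<and> conv_power (geom_offspring (b n)) j (\<alpha> n) / geom_offspring (b n) (\<alpha> n) \<le> U n) sequentially"
  proof eventually_elim
    case (elim n)
    have "0 < geom_offspring (b n) (\<alpha> n)" using elim geom_offspring_pos by auto
    moreover have "1 \<le> \<alpha> n" using \<alpha>[of n] by simp
    ultimately show ?case
      using conv_power_geom_lower[of "b n" "\<alpha> n" j] conv_power_geom_upper[of "b n" "\<alpha> n" j] elim
      by (simp add: L_def U_def pos_le_divide_eq pos_divide_le_eq)
  qed
  moreover have one_minus_b: "(\<lambda>n. 1 - b n) \<longlonglongrightarrow> 1" using tendsto_diff[OF tendsto_const b0, of 1] by simp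
  have "L \<longlonglongrightarrow> real j * 1 ^ (j - 1)"
    unfolding L_def by (intro tendsto_mult tendsto_const tendsto_power one_minus_b)
  then have "L \<longlonglongrightarrow> real j" by simp
  moreover have "U \<longlonglongrightarrow> real j + 4^j * (0 / 1)"
    unfolding U_def by (intro tendsto_add tendsto_mult tendsto_divide tendsto_const small one_minus_b) simp
  then have "U \<longlonglongrightarrow> real j" by simp
  ultimately show ?thesis
    by (auto intro: tendsto_sandwich[of L _ _ U] elim: eventually_mono)
qed

lemma conv_power_geom_param_ratio:
  fixes \<alpha> :: "nat \<Rightarrow> nat"
  assumes q: "0 < q" "q < 1" and \<alpha>: "\<And>n. 0 < \<alpha> n"
    and lim: "(\<lambda>n. real (\<alpha> n) / real n ^ 2) \<longlonglongrightarrow> 0"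
  shows "(\<lambda>n. conv_power (geom_offspring (geom_param q (n - h))) j (\<alpha> n)
            / geom_offspring (geom_param q n) (\<alpha> n)) \<longlonglongrightarrow> real j"
proof -
  define b where "b n = geom_param q (n - h)" for n
  define c where "c n = geom_param q n" for n
  \<comment> \<open>both parameters are of order 1/n and differ by O(1/n^2)\<close>
  define b' :: "nat \<Rightarrow> real" where "b' n = q / (q + (real n - real h) * (1 - q))" for n
  have b_eq: "eventually (\<lambda>n. b n = b' n) sequentially"
    using eventually_gt_at_top[of h] by eventually_elim (simp add: b_def b'_def geom_param_def of_nat_diff)
  have c_eq: "c n = q / (q + real n * (1 - q))" for n by (simp add: c_def geom_param_def)
  have transfer: "(\<lambda>n. F (b n) n) \<longlonglongrightarrow> l" if "(\<lambda>n. F (b' n) n) \<longlonglongrightarrow> l" for F l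
  proof -
    have "eventually (\<lambda>n. F (b' n) n = F (b n) n) sequentially" using b_eq by eventually_elim simp
    with that show ?thesis by (rule Lim_transform_eventually)
  qed
  have scaled: "(\<lambda>n. real (\<alpha> n) * f n) \<longlonglongrightarrow> 0"
    if "(\<lambda>n. (real n)^2 * f n) \<longlonglongrightarrow> l" for f :: "nat \<Rightarrow> real" and l
  proof -
    have "(\<lambda>n. real (\<alpha> n) / real n ^ 2 * ((real n)^2 * f n)) \<longlonglongrightarrow> 0 * l"
      by (rule tendsto_mult[OF lim that])
    moreover have "eventually (\<lambda>n. real (\<alpha> n) / real n ^ 2 * ((real n)^2 * f n) = real (\<alpha> n) * f n) sequentially"
      using eventually_gt_at_top[of 0] by eventually_elim simp
    ultimately show ?thesis by (simp add: Lim_transform_eventually)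
  qed
  have "b' \<longlonglongrightarrow> 0" unfolding b'_def using q by real_asymp
  from transfer[of "\<lambda>x n. x", OF this] have b0: "b \<longlonglongrightarrow> 0" by simp
  have c0: "c \<longlonglongrightarrow> 0" unfolding c_eq using q by real_asymp
  have "(\<lambda>n. b' n / c n) \<longlonglongrightarrow> q * inverse (1 - q) * (inverse q * (1 - q))"
    unfolding b'_def c_eq using q by real_asymp
  moreover have "q * inverse (1 - q) * (inverse q * (1 - q)) = 1" using q by (simp add: field_simps)
  ultimately have bc1: "(\<lambda>n. b n / c n) \<longlonglongrightarrow> 1" using transfer[of "\<lambda>x n. x / c n"] by simp
  have "(\<lambda>n. (real n)^2 * b' n ^ 2) \<longlonglongrightarrow> (q * inverse (1 - q))\<^sup>2"
    unfolding b'_def using q by real_asymp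
  from transfer[of "\<lambda>x n. real (\<alpha> n) * x^2", OF scaled[OF this]]
  have small: "(\<lambda>n. real (\<alpha> n) * b n ^ 2) \<longlonglongrightarrow> 0" .
  have "(\<lambda>n. (real n)^2 * (b' n - c n)) \<longlonglongrightarrow>
      q * (inverse (1 - q) * (inverse (1 - q) * q)) -
      q * (inverse (1 - q) * (inverse (1 - q) * (q - real h * (1 - q))))"
    unfolding b'_def c_eq using q by real_asymp
  from transfer[of "\<lambda>x n. real (\<alpha> n) * (x - c n)", OF scaled[OF this]]
  have diff: "(\<lambda>n. real (\<alpha> n) * (b n - c n)) \<longlonglongrightarrow> 0" .
  have params: "eventually (\<lambda>n. 0 < c n \<and> c n \<le> b n \<and> b n < 1) sequentially"
    using eventually_gt_at_top[of h]
    by eventually_elim (use q in \<open>auto simp: b_def c_def geom_param_pos geom_param_less_1 geom_param_antimono\<close>)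
  have "(\<lambda>n. conv_power (geom_offspring (b n)) j (\<alpha> n) / geom_offspring (b n) (\<alpha> n)
      * (geom_offspring (b n) (\<alpha> n) / geom_offspring (c n) (\<alpha> n))) \<longlonglongrightarrow> real j * 1"
  proof (rule tendsto_mult)
    have "eventually (\<lambda>n. 0 < b n \<and> b n < 1) sequentially"
      using params by (rule eventually_mono) simp
    from conv_power_geom_ratio[OF \<alpha> this b0 small]
    show "(\<lambda>n. conv_power (geom_offspring (b n)) j (\<alpha> n) / geom_offspring (b n) (\<alpha> n)) \<longlonglongrightarrow> real j" .
  qed (rule geom_offspring_ratio_tendsto_1[OF \<alpha> params bc1 c0 diff])
  moreover have "eventually (\<lambda>n. conv_power (geom_offspring (b n)) j (\<alpha> n) / geom_offspring (b n) (\<alpha> n)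
      * (geom_offspring (b n) (\<alpha> n) / geom_offspring (c n) (\<alpha> n))
      = conv_power (geom_offspring (b n)) j (\<alpha> n) / geom_offspring (c n) (\<alpha> n)) sequentially"
    using params
  proof eventually_elim
    case (elim n)
    then have "geom_offspring (b n) (\<alpha> n) \<noteq> 0" using geom_offspring_pos[of "b n" "\<alpha> n"] by auto
    then show ?case by simp
  qed
  ultimately have "(\<lambda>n. conv_power (geom_offspring (b n)) j (\<alpha> n) / geom_offspring (c n) (\<alpha> n))
      \<longlonglongrightarrow> real j * 1"
    by (rule Lim_transform_eventually)
  then show ?thesis by (simp add: b_def c_def)
qed

section \<open>Finite trees\<close>

lemma tree_root: "is_tree t \<Longrightarrow> [] \<in> t"
  unfolding is_tree_def by (elim conjE)

lemma tree_prefix: "is_tree t \<Longrightarrow> u @ v \<in> t \<Longrightarrow> u \<in> t"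
  unfolding is_tree_def by (elim conjE allE impE)

lemma tree_children_ex:
  assumes "is_tree t" "u \<in> t"
  shows "\<exists>k. \<forall>i. u @ [i] \<in> t \<longleftrightarrow> 1 \<le> i \<and> i \<le> k"
proof -
  from assms(1) have "\<forall>u\<in>t. \<exists>k. \<forall>i. u @ [i] \<in> t \<longleftrightarrow> 1 \<le> i \<and> i \<le> k"
    unfolding is_tree_def by (elim conjE)
  then show ?thesis using assms(2) by (rule bspec)
qed

lemma is_treeI:
  assumes "[] \<in> t" and "\<And>u v. u @ v \<in> t \<Longrightarrow> u \<in> t"
    and "\<And>u. u \<in> t \<Longrightarrow> \<exists>k. \<forall>i. u @ [i] \<in> t \<longleftrightarrow> 1 \<le> i \<and> i \<le> k"
  shows "is_tree t"
  unfolding is_tree_def using assms by (intro conjI allI impI ballI) simp_all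

lemma tree_child_iff:
  assumes "is_tree t" "u \<in> t"
  shows "u @ [i] \<in> t \<longleftrightarrow> 1 \<le> i \<and> i \<le> kids t u"
proof -
  obtain k where k: "\<forall>i. u @ [i] \<in> t \<longleftrightarrow> 1 \<le> i \<and> i \<le> k"
    using tree_children_ex[OF assms] by (elim exE)
  then have "{i. u @ [i] \<in> t} = {1..k}" by (simp add: set_eq_iff)
  then have "kids t u = k" by (simp add: kids_def)
  then show ?thesis using k by simp
qed

lemma tree_childD: "is_tree t \<Longrightarrow> u @ [i] \<in> t \<Longrightarrow> 1 \<le> i \<and> i \<le> kids t u"
  using tree_child_iff[of t u i] tree_prefix[of t u "[i]"] by simp

lemma finite_tree_up_to: "is_tree t \<Longrightarrow> finite {u\<in>t. length u \<le> n}"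
proof (induction n)
  case 0
  have "{u\<in>t. length u \<le> 0} \<subseteq> {[]}" by auto
  then show ?case by (rule finite_subset) simp
next
  case (Suc n)
  let ?U = "{u\<in>t. length u \<le> n}"
  have "{u\<in>t. length u \<le> Suc n} \<subseteq> ?U \<union> (\<Union>u\<in>?U. (\<lambda>i. u @ [i]) ` {1..kids t u})"
  proof
    fix w assume w: "w \<in> {u\<in>t. length u \<le> Suc n}"
    show "w \<in> ?U \<union> (\<Union>u\<in>?U. (\<lambda>i. u @ [i]) ` {1..kids t u})"
    proof (cases "length w \<le> n")
      case False
      then have w_eq: "butlast w @ [last w] = w" by (intro append_butlast_last_id) auto
      have "butlast w \<in> ?U"
        using w w_eq tree_prefix[OF Suc.prems, of "butlast w" "[last w]"] by auto
      moreover have "last w \<in> {1..kids t (butlast w)}"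
        using w w_eq tree_childD[OF Suc.prems, of "butlast w" "last w"] by simp
      ultimately show ?thesis by (subst w_eq[symmetric]) blast
    qed (use w in auto)
  qed
  then show ?case using Suc by (auto intro: finite_subset)
qed

lemma finite_tree: "is_tree t \<Longrightarrow> height_le h t \<Longrightarrow> finite t"
  using finite_tree_up_to[of t h] by (rule finite_subset[rotated]) (auto simp: height_le_def)

lemma is_tree_restr: "is_tree t \<Longrightarrow> is_tree (restr h t)"
proof (rule is_treeI)
  assume t: "is_tree t"
  show "[] \<in> restr h t" using tree_root[OF t] by (simp add: restr_def)
  fix u v assume "u @ v \<in> restr h t"
  then show "u \<in> restr h t" using tree_prefix[OF t, of u v] by (simp add: restr_def)
next
  fix u assume t: "is_tree t" and u: "u \<in> restr h t"
  show "\<exists>k. \<forall>i. (u @ [i] \<in> restr h t) = (1 \<le> i \<and> i \<le> k)"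
  proof (cases "length u < h")
    case True
    obtain k where "\<forall>i. (u @ [i] \<in> t) = (1 \<le> i \<and> i \<le> k)"
      using tree_children_ex[OF t] u by (auto simp: restr_def)
    then show ?thesis using True by (intro exI[of _ k]) (auto simp: restr_def)
  next
    case False
    then show ?thesis by (intro exI[of _ 0]) (auto simp: restr_def)
  qed
qed

lemma height_le_restr: "height_le h (restr h t)"
  by (simp add: height_le_def restr_def)

lemma restr_restr: "restr n (restr m t) = restr (min n m) t"
  by (auto simp: restr_def)

lemma gen_restr: "n \<le> h \<Longrightarrow> gen n (restr h t) = gen n t"
  unfolding gen_def restr_def by (rule arg_cong[where f=card]) auto

lemma restr_0: "is_tree t \<Longrightarrow> restr 0 t = {[]}"
  by (auto simp: restr_def tree_root)

lemma height_le_0: "is_tree t \<Longrightarrow> height_le 0 t \<Longrightarrow> t = {[]}"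
  by (auto simp: height_le_def tree_root)

section \<open>Adding a generation to a tree\<close>

definition level :: "tree \<Rightarrow> nat \<Rightarrow> nat list set" where
  "level t n = {u\<in>t. length u = n}"

definition extend :: "tree \<Rightarrow> nat \<Rightarrow> (nat list \<Rightarrow> nat) \<Rightarrow> tree" where
  "extend t n c = t \<union> {u @ [i] | u i. u \<in> t \<and> length u = n \<and> 1 \<le> i \<and> i \<le> c u}"

lemma gen_eq_card_level: "gen n t = card (level t n)"
  by (simp add: gen_def level_def)

lemma finite_level: "is_tree t \<Longrightarrow> height_le n t \<Longrightarrow> finite (level t n)"
  using finite_tree by (auto simp: level_def)

lemma restr_extend: "height_le n t \<Longrightarrow> restr n (extend t n c) = t"
  by (auto simp: restr_def extend_def height_le_def)

lemma height_le_extend: "height_le n t \<Longrightarrow> height_le (Suc n) (extend t n c)"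
  by (auto simp: height_le_def extend_def)

lemma is_tree_extend:
  assumes t: "is_tree t" and h: "height_le n t"
  shows "is_tree (extend t n c)"
proof (rule is_treeI)
  show "[] \<in> extend t n c" using t by (simp add: extend_def tree_root)
next
  fix u v assume uv: "u @ v \<in> extend t n c"
  show "u \<in> extend t n c"
  proof (cases "u @ v \<in> t \<or> v = []")
    case True then show ?thesis using tree_prefix[OF t] uv by (auto simp: extend_def)
  next
    case False
    then obtain w i where w: "u @ v = w @ [i]" "w \<in> t"
      using uv by (auto simp: extend_def)
    obtain v' x where "v = v' @ [x]" using False by (metis rev_exhaust)
    then have "u @ v' = w" using w(1) by simp
    then show ?thesis using tree_prefix[OF t] w(2) by (auto simp: extend_def)
  qed
next
  fix u assume u: "u \<in> extend t n c"
  show "\<exists>k. \<forall>i. (u @ [i] \<in> extend t n c) = (1 \<le> i \<and> i \<le> k)"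
  proof (cases "u \<in> t")
    case ut: True
    show ?thesis
    proof (cases "length u = n")
      case True
      have "u @ [i] \<notin> t" for i using h True by (auto simp: height_le_def)
      then show ?thesis using ut True by (intro exI[of _ "c u"]) (auto simp: extend_def)
    next
      case False
      have "u @ [i] \<in> extend t n c \<longleftrightarrow> u @ [i] \<in> t" for i using False by (auto simp: extend_def)
      then show ?thesis using tree_children_ex[OF t ut] by simp
    qed
  next
    case False
    then have "length u = Suc n" using u by (auto simp: extend_def)
    then have "u @ [i] \<notin> extend t n c" for i using h by (auto simp: extend_def height_le_def)
    then show ?thesis by (intro exI[of _ 0]) auto
  qed
qed

lemma kids_extend_level:
  assumes "height_le n t" and "u \<in> level t n"
  shows "kids (extend t n c) u = c u"
proof -
  have "u @ [i] \<notin> t" for i using assms by (auto simp: height_le_def level_def)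
  then have "{i. u @ [i] \<in> extend t n c} = {1..c u}" using assms by (auto simp: extend_def level_def)
  then show ?thesis by (simp add: kids_def)
qed

lemma kids_extend_below:
  assumes "u \<in> t" "length u < n"
  shows "kids (extend t n c) u = kids t u"
proof -
  have "{i. u @ [i] \<in> extend t n c} = {i. u @ [i] \<in> t}" using assms by (auto simp: extend_def)
  then show ?thesis by (simp add: kids_def)
qed

lemma gen_extend:
  assumes t: "is_tree t" and h: "height_le n t"
  shows "gen (Suc n) (extend t n c) = (\<Sum>u\<in>level t n. c u)"
proof -
  have "level (extend t n c) (Suc n) = (\<Union>u\<in>level t n. (\<lambda>i. u @ [i]) ` {1..c u})"
    using h by (auto simp: level_def extend_def height_le_def)
  then have "gen (Suc n) (extend t n c) = card (\<Union>u\<in>level t n. (\<lambda>i. u @ [i]) ` {1..c u})"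
    by (simp add: gen_eq_card_level)
  also have "\<dots> = (\<Sum>u\<in>level t n. card ((\<lambda>i. u @ [i]) ` {1..c u}))"
    by (rule card_UN_disjoint[OF finite_level[OF t h]]) auto
  also have "\<dots> = (\<Sum>u\<in>level t n. c u)"
    by (intro sum.cong refl) (simp add: card_image inj_on_def)
  finally show ?thesis .
qed

lemma extend_kids_restr:
  assumes t': "is_tree t'" "height_le (Suc n) t'" and r: "restr n t' = t"
  shows "extend t n (kids t') = t'"
proof (intro equalityI subsetI)
  fix w assume "w \<in> extend t n (kids t')"
  then show "w \<in> t'"
    using r tree_child_iff[OF t'(1)] by (auto simp: extend_def restr_def)
next
  fix w assume w: "w \<in> t'"
  show "w \<in> extend t n (kids t')"
  proof (cases "length w \<le> n")
    case True then show ?thesis using w r by (auto simp: extend_def restr_def)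
  next
    case False
    then have len: "length w = Suc n" using t'(2) w by (auto simp: height_le_def)
    then have w_eq: "butlast w @ [last w] = w" by (intro append_butlast_last_id) auto
    have "butlast w \<in> t" using tree_prefix[OF t'(1), of "butlast w" "[last w]"] w r len
      by (auto simp: restr_def w_eq)
    moreover have "1 \<le> last w \<and> last w \<le> kids t' (butlast w)"
      using tree_childD[OF t'(1), of "butlast w" "last w"] w w_eq by simp
    ultimately have "butlast w @ [last w] \<in> extend t n (kids t')"
      unfolding extend_def using len by auto
    then show ?thesis using w_eq by simp
  qed
qed

definition gw_weight :: "(nat \<Rightarrow> real) \<Rightarrow> nat \<Rightarrow> tree \<Rightarrow> real" where
  "gw_weight p n t = (\<Prod>u\<in>{u\<in>t. length u < n}. p (kids t u))"

lemma gw_weight_extend: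
  assumes t: "is_tree t" and h: "height_le n t"
  shows "gw_weight p (Suc n) (extend t n c) = gw_weight p n t * (\<Prod>u\<in>level t n. p (c u))"
proof -
  have "{u\<in>extend t n c. length u < Suc n} = {u\<in>t. length u < n} \<union> level t n"
    using h by (auto simp: extend_def level_def height_le_def)
  then have "gw_weight p (Suc n) (extend t n c) =
      (\<Prod>u\<in>{u\<in>t. length u < n} \<union> level t n. p (kids (extend t n c) u))"
    by (simp add: gw_weight_def)
  also have "\<dots> = (\<Prod>u\<in>{u\<in>t. length u < n}. p (kids (extend t n c) u)) *
      (\<Prod>u\<in>level t n. p (kids (extend t n c) u))"
    using finite_tree[OF t h] by (intro prod.union_disjoint) (auto simp: level_def)
  also have "\<dots> = gw_weight p n t * (\<Prod>u\<in>level t n. p (c u))"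
    unfolding gw_weight_def using h
    by (intro arg_cong2[where f="(*)"] prod.cong refl) (auto simp: kids_extend_below kids_extend_level)
  finally show ?thesis .
qed

definition compositions :: "'a set \<Rightarrow> nat \<Rightarrow> ('a \<Rightarrow> nat) set" where
  "compositions L a = {c \<in> L \<rightarrow>\<^sub>E {..a}. sum c L = a}"

lemma finite_compositions: "finite L \<Longrightarrow> finite (compositions L a)"
proof -
  assume "finite L"
  then have "finite (L \<rightarrow>\<^sub>E {..a})" by (rule finite_PiE) simp
  then show ?thesis by (rule finite_subset[rotated]) (auto simp: compositions_def)
qed

lemma compositions_insert:
  assumes fin: "finite L" and x: "x \<notin> L"
  shows "compositions (insert x L) a = (\<lambda>(k, c). c(x := k)) ` (SIGMA k:{..a}. compositions L (a - k))"
proof (intro equalityI subsetI)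
  fix d assume d: "d \<in> compositions (insert x L) a"
  then have dP: "d \<in> insert x L \<rightarrow>\<^sub>E {..a}" and ds: "sum d (insert x L) = a"
    by (auto simp: compositions_def)
  have sL: "d x + sum d L = a" using ds fin x by simp
  define c where "c = d(x := undefined)"
  have cL: "c u = d u" if "u \<in> L" for u using that x by (auto simp: c_def)
  have "c \<in> L \<rightarrow>\<^sub>E {..a - d x}"
  proof (rule PiE_I)
    fix u assume u: "u \<in> L"
    have "d u \<le> sum d L" by (rule member_le_sum[OF u _ fin]) simp
    then show "c u \<in> {..a - d x}" using sL cL[OF u] by simp
  next
    fix u assume "u \<notin> L"
    then show "c u = undefined" using dP by (cases "u = x") (auto simp: c_def)
  qed
  moreover have "sum c L = a - d x" using sL cL by (simp add: sum.cong[OF refl cL])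
  moreover have "d x \<le> a" using dP by (simp add: PiE_iff)
  moreover have "d = c(x := d x)" by (simp add: c_def)
  ultimately show "d \<in> (\<lambda>(k, c). c(x := k)) ` (SIGMA k:{..a}. compositions L (a - k))"
    by (intro image_eqI[of _ _ "(d x, c)"]) (auto simp: compositions_def)
next
  fix d assume "d \<in> (\<lambda>(k, c). c(x := k)) ` (SIGMA k:{..a}. compositions L (a - k))"
  then obtain k c where k: "k \<le> a" and c: "c \<in> compositions L (a - k)" and d: "d = c(x := k)"
    by auto
  have cP: "c \<in> L \<rightarrow>\<^sub>E {..a - k}" and cs: "sum c L = a - k" using c by (auto simp: compositions_def)
  have "d \<in> insert x L \<rightarrow>\<^sub>E {..a}"
    using cP k x unfolding d by (auto simp: PiE_iff extensional_def)
  moreover have "sum d (insert x L) = a"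
  proof -
    have "sum d L = sum c L" using x d by (intro sum.cong) auto
    then show ?thesis using fin x cs k d by simp
  qed
  ultimately show "d \<in> compositions (insert x L) a" by (simp add: compositions_def)
qed

lemma inj_on_compositions_insert:
  assumes x: "x \<notin> L"
  shows "inj_on (\<lambda>(k, c). c(x := k)) (SIGMA k:{..a}. compositions L (a - k))"
proof (rule inj_onI, clarify)
  fix k1 c1 k2 c2
  assume c: "c1 \<in> compositions L (a - k1)" "c2 \<in> compositions L (a - k2)"
    and eq: "c1(x := k1) = c2(x := k2)"
  have "c1 \<in> extensional L" "c2 \<in> extensional L" using c by (auto simp: compositions_def PiE_def)
  then have "c1 x = c2 x" using x by (simp add: extensional_def)
  then show "k1 = k2 \<and> c1 = c2"
    using eq by (metis fun_upd_same fun_upd_triv fun_upd_upd)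
qed

lemma sum_prod_compositions:
  assumes "finite L"
  shows "(\<Sum>c\<in>compositions L a. \<Prod>u\<in>L. f (c u)) = conv_power f (card L) a"
  using assms
proof (induction L arbitrary: a rule: finite_induct)
  case empty
  have "compositions ({} :: 'a set) a = (if a = 0 then {\<lambda>_. undefined} else {})"
    by (auto simp: compositions_def)
  then show ?case by simp
next
  case (insert x L)
  have "(\<Sum>c\<in>compositions (insert x L) a. \<Prod>u\<in>insert x L. f (c u))
      = (\<Sum>(k, c)\<in>(SIGMA k:{..a}. compositions L (a - k)). \<Prod>u\<in>insert x L. f ((c(x := k)) u))"
    unfolding compositions_insert[OF insert.hyps]
    by (subst sum.reindex[OF inj_on_compositions_insert[OF insert.hyps(2)]])
      (simp add: case_prod_unfold)
  also have "\<dots> = (\<Sum>k\<le>a. \<Sum>c\<in>compositions L (a - k). f k * (\<Prod>u\<in>L. f (c u)))"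
  proof (subst sum.Sigma[symmetric], (use finite_compositions insert.hyps in auto)[2],
      intro sum.cong refl)
    fix k c
    have "(\<Prod>u\<in>L. f ((c(x := k)) u)) = (\<Prod>u\<in>L. f (c u))"
      using insert.hyps by (intro prod.cong) auto
    then show "(\<Prod>u\<in>insert x L. f ((c(x := k)) u)) = f k * (\<Prod>u\<in>L. f (c u))"
      using insert.hyps by simp
  qed
  also have "\<dots> = conv_power f (card (insert x L)) a"
    using insert.hyps by (simp add: sum_distrib_left[symmetric] insert.IH)
  finally show ?case .
qed

lemma restr_gen_Suc_iff_extend:
  assumes T: "is_tree T" and t: "is_tree t" "height_le n t"
  shows "restr n T = t \<and> gen (Suc n) T = a \<longleftrightarrow>
    (\<exists>c\<in>compositions (level t n) a. restr (Suc n) T = extend t n c)"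
proof
  assume r: "restr n T = t \<and> gen (Suc n) T = a"
  define t' where "t' = restr (Suc n) T"
  have t': "is_tree t'" "height_le (Suc n) t'" "restr n t' = t"
    using r by (simp_all add: t'_def is_tree_restr[OF T] height_le_restr restr_restr)
  define c where "c = restrict (kids t') (level t n)"
  have "extend t n c = extend t n (kids t')"
    by (auto simp: extend_def c_def level_def)
  then have t'_eq: "extend t n c = t'"
    using extend_kids_restr[OF t'] by simp
  have "sum c (level t n) = gen (Suc n) t'"
    using gen_extend[OF t, of c] by (simp add: t'_eq)
  also have "\<dots> = a" using r by (simp add: t'_def gen_restr)
  finally have "c \<in> compositions (level t n) a"
    using member_le_sum[of _ "level t n" c] finite_level[OF t]
    by (auto simp: compositions_def c_def)
  then show "\<exists>c\<in>compositions (level t n) a. restr (Suc n) T = extend t n c"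
    using t'_eq by (auto simp: t'_def)
next
  assume "\<exists>c\<in>compositions (level t n) a. restr (Suc n) T = extend t n c"
  then obtain c where c: "c \<in> compositions (level t n) a" and T_eq: "restr (Suc n) T = extend t n c"
    by blast
  have "restr n T = restr n (restr (Suc n) T)" by (simp add: restr_restr)
  then have "restr n T = t" using T_eq restr_extend[OF t(2)] by simp
  moreover have "gen (Suc n) T = gen (Suc n) (restr (Suc n) T)" by (simp add: gen_restr)
  then have "gen (Suc n) T = a" using T_eq gen_extend[OF t] c by (simp add: compositions_def)
  ultimately show "restr n T = t \<and> gen (Suc n) T = a" by simp
qed

lemma inj_on_extend:
  assumes "height_le n t"
  shows "inj_on (extend t n) (compositions (level t n) a)"
proof (rule inj_onI)
  fix c c' assume c: "c \<in> compositions (level t n) a" "c' \<in> compositions (level t n) a"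
    and eq: "extend t n c = extend t n c'"
  show "c = c'"
  proof
    fix u show "c u = c' u"
      using kids_extend_level[OF assms, of u c] kids_extend_level[OF assms, of u c'] eq c
      by (cases "u \<in> level t n") (auto simp: compositions_def PiE_def extensional_def)
  qed
qed

section \<open>Galton--Watson trees\<close>

lemma GW_prob_space: "is_GW_tree M T p \<Longrightarrow> prob_space M"
  by (simp add: is_GW_tree_def)

lemma GW_is_tree: "is_GW_tree M T p \<Longrightarrow> \<omega> \<in> space M \<Longrightarrow> is_tree (T \<omega>)"
  by (simp add: is_GW_tree_def)

lemma GW_restr_sets: "is_GW_tree M T p \<Longrightarrow> {\<omega>\<in>space M. restr h (T \<omega>) = t} \<in> sets M"
  by (simp add: is_GW_tree_def)

lemma GW_restr_prob:
  assumes GW: "is_GW_tree M T p" and t: "is_tree t" "height_le n t"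
  shows "measure M {\<omega>\<in>space M. restr n (T \<omega>) = t} = gw_weight p n t"
proof (cases n)
  case 0
  then have "{\<omega>\<in>space M. restr n (T \<omega>) = t} = space M"
    using GW_is_tree[OF GW] restr_0 height_le_0[OF t(1)] t(2) by auto
  then show ?thesis using prob_space.prob_space[OF GW_prob_space[OF GW]] 0
    by (simp add: gw_weight_def)
next
  case (Suc m)
  then have "restr (n - 1) t = {u\<in>t. length u < n}" by (auto simp: restr_def)
  then show ?thesis using GW t Suc unfolding is_GW_tree_def gw_weight_def by auto
qed

text \<open>Given the first n generations, the vertices of generation n reproduce independently.\<close>
lemma GW_restr_next_gen:
  assumes GW: "is_GW_tree M T p" and t: "is_tree t" "height_le n t"
  shows "{\<omega>\<in>space M. restr n (T \<omega>) = t \<and> gen (Suc n) (T \<omega>) = a} \<in> sets M"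
    and "measure M {\<omega>\<in>space M. restr n (T \<omega>) = t \<and> gen (Suc n) (T \<omega>) = a} =
      gw_weight p n t * conv_power p (gen n t) a"
proof -
  interpret prob_space M using GW_prob_space[OF GW] .
  define C where "C = compositions (level t n) a"
  define A where "A c = {\<omega>\<in>space M. restr (Suc n) (T \<omega>) = extend t n c}" for c
  have eq: "{\<omega>\<in>space M. restr n (T \<omega>) = t \<and> gen (Suc n) (T \<omega>) = a} = (\<Union>c\<in>C. A c)"
  proof (rule set_eqI)
    fix \<omega>
    show "\<omega> \<in> {\<omega>\<in>space M. restr n (T \<omega>) = t \<and> gen (Suc n) (T \<omega>) = a} \<longleftrightarrow> \<omega> \<in> (\<Union>c\<in>C. A c)"
      using restr_gen_Suc_iff_extend[OF GW_is_tree[OF GW] t, of \<omega> a]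
      by (cases "\<omega> \<in> space M") (auto simp: A_def C_def)
  qed
  have finite: "finite C" unfolding C_def by (rule finite_compositions[OF finite_level[OF t]])
  have sets: "A ` C \<subseteq> sets M" using GW_restr_sets[OF GW] by (auto simp: A_def)
  have "disjoint_family_on A C"
    using inj_on_extend[OF t(2)] by (auto simp: disjoint_family_on_def A_def C_def inj_on_def)
  then have "measure M (\<Union>c\<in>C. A c) = (\<Sum>c\<in>C. measure M (A c))"
    by (rule finite_measure_finite_Union[OF finite sets])
  also have "\<dots> = (\<Sum>c\<in>C. gw_weight p n t * (\<Prod>u\<in>level t n. p (c u)))"
    unfolding A_def
    by (intro sum.cong refl) (simp add: GW_restr_prob[OF GW is_tree_extend[OF t] height_le_extend[OF t(2)]]
        gw_weight_extend[OF t])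
  also have "\<dots> = gw_weight p n t * conv_power p (gen n t) a"
    by (simp add: sum_distrib_left[symmetric] C_def sum_prod_compositions finite_level[OF t]
        gen_eq_card_level)
  finally show "measure M {\<omega>\<in>space M. restr n (T \<omega>) = t \<and> gen (Suc n) (T \<omega>) = a} =
      gw_weight p n t * conv_power p (gen n t) a" unfolding eq .
  show "{\<omega>\<in>space M. restr n (T \<omega>) = t \<and> gen (Suc n) (T \<omega>) = a} \<in> sets M"
    unfolding eq using finite sets by blast
qed

lemma measure_UN_proportional:
  assumes "prob_space M" and I: "countable I"
    and X: "\<And>i. i \<in> I \<Longrightarrow> X i \<in> sets M" and Y: "\<And>i. i \<in> I \<Longrightarrow> Y i \<in> sets M"
    and disj: "disjoint_family_on X I" "disjoint_family_on Y I"
    and k: "0 \<le> k" and proportional: "\<And>i. i \<in> I \<Longrightarrow> measure M (Y i) = k * measure M (X i)"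
  shows "measure M (\<Union>i\<in>I. Y i) = k * measure M (\<Union>i\<in>I. X i)"
proof -
  interpret prob_space M by fact
  have "emeasure M (\<Union>i\<in>I. Y i) = (\<integral>\<^sup>+i. emeasure M (Y i) \<partial>count_space I)"
    by (rule emeasure_UN_countable[OF Y I disj(2)])
  also have "\<dots> = (\<integral>\<^sup>+i. ennreal k * emeasure M (X i) \<partial>count_space I)"
    using proportional k by (intro nn_integral_cong) (simp add: emeasure_eq_measure ennreal_mult)
  also have "\<dots> = ennreal k * emeasure M (\<Union>i\<in>I. X i)"
    by (simp add: nn_integral_cmult emeasure_UN_countable[OF X I disj(1)])
  finally show ?thesis
    using k by (simp add: emeasure_eq_measure ennreal_mult[symmetric])
qed

lemma GW_restr_gen_Suc:
  assumes GW: "is_GW_tree M T p" and p_nonneg: "\<And>k. 0 \<le> p k" and "h \<le> n"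
  shows "{\<omega>\<in>space M. restr h (T \<omega>) = t \<and> gen n (T \<omega>) = b \<and> gen (Suc n) (T \<omega>) = a} \<in> sets M"
    and "measure M {\<omega>\<in>space M. restr h (T \<omega>) = t \<and> gen n (T \<omega>) = b \<and> gen (Suc n) (T \<omega>) = a} =
      conv_power p b a * measure M {\<omega>\<in>space M. restr h (T \<omega>) = t \<and> gen n (T \<omega>) = b}"
proof -
  \<comment> \<open>decompose according to the first n generations, of which there are countably many\<close>
  define S where "S = {t'. is_tree t' \<and> height_le n t' \<and> restr h t' = t \<and> gen n t' = b}"
  define X where "X t' = {\<omega>\<in>space M. restr n (T \<omega>) = t'}" for t'
  define Y where "Y t' = {\<omega>\<in>space M. restr n (T \<omega>) = t' \<and> gen (Suc n) (T \<omega>) = a}" for t'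
  have "countable S"
    using countable_Collect_finite by (rule countable_subset[rotated]) (auto simp: S_def finite_tree)
  have restr_iff: "restr h T' = t \<and> gen n T' = b \<longleftrightarrow> restr n T' \<in> S" if "is_tree T'" for T'
    using that \<open>h \<le> n\<close>
    by (auto simp: S_def is_tree_restr height_le_restr restr_restr min_def gen_restr)
  have GX: "{\<omega>\<in>space M. restr h (T \<omega>) = t \<and> gen n (T \<omega>) = b} = (\<Union>t'\<in>S. X t')"
    using restr_iff GW_is_tree[OF GW] by (auto simp: X_def)
  have BY: "{\<omega>\<in>space M. restr h (T \<omega>) = t \<and> gen n (T \<omega>) = b \<and> gen (Suc n) (T \<omega>) = a} = (\<Union>t'\<in>S. Y t')"
    using restr_iff GW_is_tree[OF GW] by (auto simp: Y_def)
  have Y_sets: "Y t' \<in> sets M" if "t' \<in> S" for t'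
    using GW_restr_next_gen(1)[OF GW] that by (auto simp: S_def Y_def)
  then show "{\<omega>\<in>space M. restr h (T \<omega>) = t \<and> gen n (T \<omega>) = b \<and> gen (Suc n) (T \<omega>) = a} \<in> sets M"
    unfolding BY using \<open>countable S\<close> by (intro sets.countable_UN') auto
  have proportional: "measure M (Y t') = conv_power p b a * measure M (X t')" if "t' \<in> S" for t'
    using that GW_restr_next_gen(2)[OF GW] GW_restr_prob[OF GW] by (auto simp: S_def X_def Y_def)
  have X_sets: "X t' \<in> sets M" if "t' \<in> S" for t' using GW_restr_sets[OF GW] by (simp add: X_def)
  have "disjoint_family_on X S" "disjoint_family_on Y S"
    by (auto simp: X_def Y_def disjoint_family_on_def)
  from measure_UN_proportional[OF GW_prob_space[OF GW] \<open>countable S\<close> X_sets Y_sets this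
      conv_power_nonneg[OF p_nonneg] proportional]
  show "measure M {\<omega>\<in>space M. restr h (T \<omega>) = t \<and> gen n (T \<omega>) = b \<and> gen (Suc n) (T \<omega>) = a} =
      conv_power p b a * measure M {\<omega>\<in>space M. restr h (T \<omega>) = t \<and> gen n (T \<omega>) = b}"
    unfolding GX BY .
qed

lemma GW_restr_gen:
  assumes GW: "is_GW_tree M T p" and p_nonneg: "\<And>k. 0 \<le> p k"
  shows "{\<omega>\<in>space M. restr h (T \<omega>) = t \<and> gen (h + m) (T \<omega>) = a} \<in> sets M \<and>
    measure M {\<omega>\<in>space M. restr h (T \<omega>) = t \<and> gen (h + m) (T \<omega>) = a} =
      measure M {\<omega>\<in>space M. restr h (T \<omega>) = t} * generation_kernel p m (gen h t) a"
proof (induction m arbitrary: a)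
  case 0
  have "gen h (T \<omega>) = gen h t" if "restr h (T \<omega>) = t" for \<omega>
    using gen_restr[of h h "T \<omega>"] that by simp
  then have "{\<omega>\<in>space M. restr h (T \<omega>) = t \<and> gen (h + 0) (T \<omega>) = a} =
      (if a = gen h t then {\<omega>\<in>space M. restr h (T \<omega>) = t} else {})"
    by auto
  then show ?case using GW_restr_sets[OF GW] by auto
next
  case (Suc m)
  interpret prob_space M using GW_prob_space[OF GW] .
  define At where "At = {\<omega>\<in>space M. restr h (T \<omega>) = t}"
  define B where "B b = {\<omega>\<in>space M. restr h (T \<omega>) = t \<and> gen (h + m) (T \<omega>) = b \<and>
    gen (Suc (h + m)) (T \<omega>) = a}" for b
  have B_sets: "range B \<subseteq> sets M"
    using GW_restr_gen_Suc(1)[OF GW p_nonneg, of h "h + m"] by (auto simp: B_def)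
  have B_prob: "measure M (B b) = measure M At * (generation_kernel p m (gen h t) b * conv_power p b a)" for b
    using GW_restr_gen_Suc(2)[OF GW p_nonneg, of h "h + m" t b a] Suc.IH[of b]
    by (simp add: B_def At_def mult_ac)
  have union: "{\<omega>\<in>space M. restr h (T \<omega>) = t \<and> gen (h + Suc m) (T \<omega>) = a} = (\<Union>b. B b)"
    by (auto simp: B_def)
  have "disjoint_family B" by (auto simp: disjoint_family_on_def B_def)
  from measure_UNION[OF B_sets this] have B_sums:
    "(\<lambda>b. measure M At * (generation_kernel p m (gen h t) b * conv_power p b a)) sums measure M (\<Union>b. B b)"
    by (simp add: B_prob)
  have "measure M (\<Union>b. B b) = measure M At * generation_kernel p (Suc m) (gen h t) a"
  proof (cases "measure M At = 0")
    case True
    have "(\<Union>b. B b) \<subseteq> At" "At \<in> sets M"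
      using GW_restr_sets[OF GW] by (auto simp: B_def At_def)
    then have "measure M (\<Union>b. B b) \<le> measure M At"
      using B_sets by (intro finite_measure_mono) auto
    then have "measure M (\<Union>b. B b) = 0"
      using True measure_nonneg[of M "\<Union>b. B b"] by linarith
    then show ?thesis using True by simp
  next
    case False
    from sums_divide[OF B_sums, of "measure M At"] False
    have "(\<lambda>b. generation_kernel p m (gen h t) b * conv_power p b a) sums (measure M (\<Union>b. B b) / measure M At)"
      by simp
    then show ?thesis using False by (simp add: sums_iff)
  qed
  then show ?case using B_sets unfolding union At_def by auto
qed

lemma GW_gen_prob:
  assumes GW: "is_GW_tree M T p" and p_nonneg: "\<And>k. 0 \<le> p k"
  shows "measure M {\<omega>\<in>space M. gen n (T \<omega>) = a} = generation_kernel p n 1 a"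
proof -
  have "{\<omega>\<in>space M. restr 0 (T \<omega>) = {[]}} = space M"
    using GW_is_tree[OF GW] restr_0 by auto
  moreover have "{\<omega>\<in>space M. restr 0 (T \<omega>) = {[]} \<and> gen (0 + n) (T \<omega>) = a} = {\<omega>\<in>space M. gen n (T \<omega>) = a}"
    using GW_is_tree[OF GW] restr_0 by auto
  moreover have "gen 0 {[]} = 1" by (simp add: gen_def)
  ultimately show ?thesis
    using GW_restr_gen[OF GW p_nonneg, of 0 "{[]}" n a] prob_space.prob_space[OF GW_prob_space[OF GW]]
    by simp
qed

lemma GW_restr_gen_prob:
  assumes GW: "is_GW_tree M T p" and p_nonneg: "\<And>k. 0 \<le> p k"
    and t: "is_tree t" "height_le h t" and "h \<le> n"
  shows "measure M {\<omega>\<in>space M. restr h (T \<omega>) = t \<and> gen n (T \<omega>) = a} =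
    gw_weight p h t * generation_kernel p (n - h) (gen h t) a"
  using GW_restr_gen[OF GW p_nonneg, of h t "n - h" a] GW_restr_prob[OF GW t] \<open>h \<le> n\<close> by simp

section \<open>Kesten's tree\<close>

text \<open>For a critical law, a spine vertex with k \<ge> 1 children has weight k p k / k = p k, so the
  law of the first h generations does not depend on where the spine ends.\<close>
lemma Kesten_restr_spine_prob:
  assumes K: "is_Kesten_tree N Tk V p" and mean: "offspring_mean p = 1"
    and t: "is_tree t" "height_le h t" and v: "v \<in> level t h" and "1 \<le> h"
  shows "measure N {\<omega>\<in>space N. restr h (Tk \<omega>) = t \<and> spine (V \<omega>) h = v} = gw_weight p h t"
proof -
  have v: "length v = h" "v \<in> t" using v by (auto simp: level_def)
  have "measure N {\<omega>\<in>space N. restr h (Tk \<omega>) = t \<and> spine (V \<omega>) h = v} =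
      (\<Prod>u\<in>restr (h - 1) t. if u = take (length u) v then size_biased p (kids t u) / real (kids t u)
        else p (kids t u))"
    using K t v \<open>1 \<le> h\<close> unfolding is_Kesten_tree_def by blast
  also have "\<dots> = (\<Prod>u\<in>restr (h - 1) t. p (kids t u))"
  proof (rule prod.cong[OF refl])
    fix u assume u: "u \<in> restr (h - 1) t"
    show "(if u = take (length u) v then size_biased p (kids t u) / real (kids t u) else p (kids t u)) =
        p (kids t u)"
    proof (cases "u = take (length u) v")
      case True
      have "length u < length v" using u v \<open>1 \<le> h\<close> by (auto simp: restr_def)
      then have "u @ [v ! length u] = take (Suc (length u)) v"
        using True by (metis take_Suc_conv_app_nth)
      then have "u @ [v ! length u] \<in> t"
        using tree_prefix[OF t(1), of _ "drop (Suc (length u)) v"] v(2) by simp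
      then have "1 \<le> kids t u" using tree_childD[OF t(1)] by force
      then show ?thesis using True mean by (simp add: size_biased_def)
    qed simp
  qed
  also have "\<dots> = gw_weight p h t"
    using \<open>1 \<le> h\<close> by (simp add: gw_weight_def restr_def less_Suc_eq_le[symmetric])
  finally show ?thesis .
qed

lemma Kesten_restr_prob:
  assumes K: "is_Kesten_tree N Tk V p" and mean: "offspring_mean p = 1"
    and t: "is_tree t" "height_le h t"
  shows "measure N {\<omega>\<in>space N. restr h (Tk \<omega>) = t} = real (gen h t) * gw_weight p h t"
proof -
  interpret prob_space N using K by (simp add: is_Kesten_tree_def)
  have Ktree: "is_tree (Tk \<omega>)" "spine (V \<omega>) h \<in> Tk \<omega>" if "\<omega> \<in> space N" for \<omega>
    using K that by (simp_all add: is_Kesten_tree_def)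
  show ?thesis
  proof (cases "h = 0")
    case True
    then have "t = {[]}" using height_le_0[OF t(1)] t(2) by simp
    moreover have "{\<omega>\<in>space N. restr 0 (Tk \<omega>) = {[]}} = space N"
      using Ktree restr_0 by auto
    ultimately show ?thesis using True prob_space by (simp add: gen_def gw_weight_def)
  next
    case False
    define A where "A v = {\<omega>\<in>space N. restr h (Tk \<omega>) = t \<and> spine (V \<omega>) h = v}" for v
    have "{\<omega>\<in>space N. restr h (Tk \<omega>) = t} = (\<Union>v\<in>level t h. A v)"
      using Ktree by (auto simp: A_def level_def restr_def spine_def)
    moreover have "A ` level t h \<subseteq> sets N"
      using K by (auto simp: A_def is_Kesten_tree_def)
    moreover have "disjoint_family_on A (level t h)"
      by (auto simp: disjoint_family_on_def A_def)
    ultimately have "measure N {\<omega>\<in>space N. restr h (Tk \<omega>) = t} = (\<Sum>v\<in>level t h. measure N (A v))"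
      using finite_measure_finite_Union[OF finite_level[OF t]] by simp
    also have "\<dots> = (\<Sum>v\<in>level t h. gw_weight p h t)"
      using Kesten_restr_spine_prob[OF K mean t] False by (simp add: A_def)
    finally show ?thesis by (simp add: gen_eq_card_level)
  qed
qed

theorem corollary6p2:
  fixes q :: real and M :: "'a measure" and T :: "'a \<Rightarrow> tree"
    and N :: "'b measure" and Tk :: "'b \<Rightarrow> tree" and V :: "'b \<Rightarrow> nat \<Rightarrow> nat"
    and \<alpha> :: "nat \<Rightarrow> nat"
  assumes "0 < q" and "q < 1"
    and "is_GW_tree M T (geom_offspring q)"
    and "is_Kesten_tree N Tk V (geom_offspring q)"
    and "\<forall>n. \<alpha> n > 0"
    and "(\<lambda>n. real (\<alpha> n) / real n ^ 2) \<longlonglongrightarrow> 0"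
  shows "\<forall>h t. (\<lambda>n. measure M {\<omega>\<in>space M. restr h (T \<omega>) = t \<and> gen n (T \<omega>) = \<alpha> n}
                    / measure M {\<omega>\<in>space M. gen n (T \<omega>) = \<alpha> n})
             \<longlonglongrightarrow> measure N {\<omega>\<in>space N. restr h (Tk \<omega>) = t}"
proof (intro allI)
  fix h :: nat and t :: tree
  note q = assms(1,2) and GW = assms(3) and K = assms(4)
  let ?p = "geom_offspring q" and ?g = "\<lambda>m. geom_offspring (geom_param q m)"
  have p_nonneg: "0 \<le> ?p k" for k using q by (simp add: geom_offspring_nonneg)
  have gen_prob: "measure M {\<omega>\<in>space M. gen n (T \<omega>) = \<alpha> n} = ?g n (\<alpha> n)" for n
    unfolding GW_gen_prob[OF GW p_nonneg] generation_kernel_geom[OF q] conv_power_1 ..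
  show "(\<lambda>n. measure M {\<omega>\<in>space M. restr h (T \<omega>) = t \<and> gen n (T \<omega>) = \<alpha> n}
      / measure M {\<omega>\<in>space M. gen n (T \<omega>) = \<alpha> n}) \<longlonglongrightarrow> measure N {\<omega>\<in>space N. restr h (Tk \<omega>) = t}"
  proof (cases "is_tree t \<and> height_le h t")
    case False
    then have "{\<omega>\<in>space M. restr h (T \<omega>) = t \<and> gen n (T \<omega>) = \<alpha> n} = {}"
      and "{\<omega>\<in>space N. restr h (Tk \<omega>) = t} = {}" for n
      using GW_is_tree[OF GW] K is_tree_restr height_le_restr unfolding is_Kesten_tree_def by blast+
    then show ?thesis by (simp only:) simp
  next
    case True
    have "eventually (\<lambda>n. gw_weight ?p h t * (conv_power (?g (n - h)) (gen h t) (\<alpha> n) / ?g n (\<alpha> n)) =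
        measure M {\<omega>\<in>space M. restr h (T \<omega>) = t \<and> gen n (T \<omega>) = \<alpha> n}
          / measure M {\<omega>\<in>space M. gen n (T \<omega>) = \<alpha> n}) sequentially"
      using eventually_ge_at_top[of h]
      by eventually_elim
        (use True in \<open>simp add: GW_restr_gen_prob[OF GW p_nonneg] gen_prob generation_kernel_geom[OF q]\<close>)
    moreover have "(\<lambda>n. gw_weight ?p h t * (conv_power (?g (n - h)) (gen h t) (\<alpha> n) / ?g n (\<alpha> n)))
        \<longlonglongrightarrow> gw_weight ?p h t * real (gen h t)"
      using conv_power_geom_param_ratio[OF q] assms(5,6) by (intro tendsto_mult tendsto_const) auto
    ultimately show ?thesis
      using Kesten_restr_prob[OF K offspring_mean_geom[OF q]] True
      by (simp add: Lim_transform_eventually mult.commute)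
  qed
qed

end
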